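(* Let $\mathbb{G}\subseteq S_N^+$ be a quantum permutation group. The orbital relation $\sim_2$ on $\{1,\dots,N\}^2$ is transitive: if $u_{i_2j_2}u_{i_1j_1}\neq0$ and $u_{j_2k_2}u_{j_1k_1}\neq0$ in $C(\mathbb{G})$, then $u_{i_2k_2}u_{i_1k_1}\neq0$.
   Context: A quantum permutation group $\mathbb{G}\subseteq S_N^+$: a unital $\mathrm{C}^*$-algebra $C(\mathbb{G})$ generated by the entries of an $N\times N$ magic unitary $u=(u_{ij})$ (projections, rows and columns summing to $1$), with a unital $*$-homomorphism $\Delta(u_{ij})=\sum_k u_{ik}\otimes u_{kj}$. For $k\ge1$ the $k$-orbital relation $\sim_k$ on $\{1,\dots,N\}^k$ is defined by $(i_k,\dots,i_1)\sim_k(j_k,\dots,j_1)$ iff $u_{i_kj_k}\cdots u_{i_1j_1}\neq0$; $\sim_2$ is called the orbital relation. *)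

theory Defs
  imports "HOL-Analysis.Analysis"
begin

class cstar_algebra = real_normed_algebra_1 + banach +
  fixes scaleC :: "complex \<Rightarrow> 'a \<Rightarrow> 'a"
    and cstar :: "'a \<Rightarrow> 'a"
  assumes scaleC_add_right: "scaleC c (x + y) = scaleC c x + scaleC c y"
    and scaleC_add_left: "scaleC (c + d) x = scaleC c x + scaleC d x"
    and scaleC_scaleC: "scaleC c (scaleC d x) = scaleC (c * d) x"
    and scaleC_one: "scaleC 1 x = x"
    and scaleC_of_real: "scaleC (complex_of_real r) x = scaleR r x"
    and scaleC_mult_left: "scaleC c x * y = scaleC c (x * y)"
    and scaleC_mult_right: "x * scaleC c y = scaleC c (x * y)"
    and norm_scaleC: "norm (scaleC c x) = cmod c * norm x"
    and cstar_cstar: "cstar (cstar x) = x"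
    and cstar_add: "cstar (x + y) = cstar x + cstar y"
    and cstar_mult: "cstar (x * y) = cstar y * cstar x"
    and cstar_scaleC: "cstar (scaleC c x) = scaleC (cnj c) (cstar x)"
    and cstar_identity: "norm (cstar x * x) = (norm x)\<^sup>2"

inductive_set star_alg_gen :: "'a::cstar_algebra set \<Rightarrow> 'a set" for S where
  gen: "x \<in> S \<Longrightarrow> x \<in> star_alg_gen S"
| one: "1 \<in> star_alg_gen S"
| add: "x \<in> star_alg_gen S \<Longrightarrow> y \<in> star_alg_gen S \<Longrightarrow> x + y \<in> star_alg_gen S"
| mult: "x \<in> star_alg_gen S \<Longrightarrow> y \<in> star_alg_gen S \<Longrightarrow> x * y \<in> star_alg_gen S"
| scale: "x \<in> star_alg_gen S \<Longrightarrow> scaleC c x \<in> star_alg_gen S"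
| star: "x \<in> star_alg_gen S \<Longrightarrow> cstar x \<in> star_alg_gen S"

definition generates_cstar :: "'a::cstar_algebra set \<Rightarrow> bool" where
  "generates_cstar S \<longleftrightarrow> closure (star_alg_gen S) = UNIV"

definition is_projection :: "'a::cstar_algebra \<Rightarrow> bool" where
  "is_projection p \<longleftrightarrow> cstar p = p \<and> p * p = p"

definition magic_unitary :: "nat \<Rightarrow> (nat \<Rightarrow> nat \<Rightarrow> 'a::cstar_algebra) \<Rightarrow> bool" where
  "magic_unitary N u \<longleftrightarrow>
     (\<forall>i\<in>{1..N}. \<forall>j\<in>{1..N}. is_projection (u i j)) \<and>
     (\<forall>i\<in>{1..N}. (\<Sum>j\<in>{1..N}. u i j) = 1) \<and>
     (\<forall>j\<in>{1..N}. (\<Sum>i\<in>{1..N}. u i j) = 1)"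

text \<open>tp realises B as a C*-tensor product of A with itself: tp is a bilinear map
a, b |-> a \<otimes> b that is multiplicative, *-preserving, unital, a cross norm, and the
elementary tensors span a dense subspace of B. (Minimality of the norm cannot be
expressed without a spatial representation.)\<close>
definition cstar_tensor ::
  "('a::cstar_algebra \<Rightarrow> 'a \<Rightarrow> 'b::cstar_algebra) \<Rightarrow> bool" where
  "cstar_tensor tp \<longleftrightarrow>
     (\<forall>x y z. tp (x + y) z = tp x z + tp y z) \<and>
     (\<forall>x y z. tp x (y + z) = tp x y + tp x z) \<and>
     (\<forall>c x y. tp (scaleC c x) y = scaleC c (tp x y)) \<and>
     (\<forall>c x y. tp x (scaleC c y) = scaleC c (tp x y)) \<and>
     (\<forall>x y z w. tp x y * tp z w = tp (x * z) (y * w)) \<and>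
     (\<forall>x y. cstar (tp x y) = tp (cstar x) (cstar y)) \<and>
     tp 1 1 = 1 \<and>
     (\<forall>x y. norm (tp x y) = norm x * norm y) \<and>
     closure {(\<Sum>k<n. tp (f k) (g k)) | (n::nat) (f::nat \<Rightarrow> 'a) (g::nat \<Rightarrow> 'a). True} = UNIV"

definition unital_star_hom :: "('a::cstar_algebra \<Rightarrow> 'b::cstar_algebra) \<Rightarrow> bool" where
  "unital_star_hom h \<longleftrightarrow>
     (\<forall>x y. h (x + y) = h x + h y) \<and>
     (\<forall>c x. h (scaleC c x) = scaleC c (h x)) \<and>
     (\<forall>x y. h (x * y) = h x * h y) \<and>
     (\<forall>x. h (cstar x) = cstar (h x)) \<and>
     h 1 = 1"

text \<open>(A, u, tp, Delta) is a quantum permutation group G \<subseteq> S_N^+ with C(G) = A,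
fundamental magic unitary u (indexed by {1..N}), C(G) \<otimes> C(G) realised by tp, and
comultiplication Delta.\<close>
definition quantum_permutation_group ::
  "nat \<Rightarrow> (nat \<Rightarrow> nat \<Rightarrow> 'a::cstar_algebra) \<Rightarrow> ('a \<Rightarrow> 'a \<Rightarrow> 'b::cstar_algebra) \<Rightarrow> ('a \<Rightarrow> 'b) \<Rightarrow> bool"
  where
  "quantum_permutation_group N u tp \<Delta> \<longleftrightarrow>
     magic_unitary N u \<and>
     generates_cstar {u i j | i j. i \<in> {1..N} \<and> j \<in> {1..N}} \<and>
     cstar_tensor tp \<and>
     unital_star_hom \<Delta> \<and>
     (\<forall>i\<in>{1..N}. \<forall>j\<in>{1..N}. \<Delta> (u i j) = (\<Sum>k\<in>{1..N}. tp (u i k) (u k j)))"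

text \<open>A k-tuple (i_k, ..., i_1) is represented by the list [i_k, ..., i_1]; the product
u_{i_k j_k} ... u_{i_1 j_1} is taken in list order.\<close>
fun prod_entries :: "(nat \<Rightarrow> nat \<Rightarrow> 'a::cstar_algebra) \<Rightarrow> nat list \<Rightarrow> nat list \<Rightarrow> 'a" where
  "prod_entries u (i # is) (j # js) = u i j * prod_entries u is js"
| "prod_entries u _ _ = 1"

definition orbital_rel :: "nat \<Rightarrow> (nat \<Rightarrow> nat \<Rightarrow> 'a::cstar_algebra) \<Rightarrow> nat \<Rightarrow> (nat list \<times> nat list) set"
  where
  "orbital_rel N u k =
     {(is, js). length is = k \<and> length js = k \<and> set is \<subseteq> {1..N} \<and> set js \<subseteq> {1..N}
                \<and> prod_entries u is js \<noteq> 0}"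

end

theory Submission
  imports Defs
begin

text \<open>Sandwiching \<Delta>(u(i2,k2) u(i1,k1)) = \<Delta>(u(i2,k2)) \<Delta>(u(i1,k1)) between u(i2,j2) \<otimes> 1 and
  u(i1,j1) \<otimes> 1 yields (u(i2,j2) u(i1,j1)) \<otimes> (u(j2,k2) u(j1,k1)), because distinct entries of a
  row of a magic unitary are orthogonal; by the cross-norm property this is nonzero whenever both
  factors are.

  Orthogonality of projections summing to 1 is a positivity statement. Without order theory it
  follows from the fact that a self-adjoint b in the corner PAP of a projection P with
  \<parallel>P \<plusminus> b\<parallel> \<le> 1 vanishes: the C*-identity gives \<parallel>P + z b\<parallel> \<le> 1 for |z| \<le> 1/2, and averaging
  \<omega>^(-j) (P + \<omega>^j b/2)^n over the (n+1)-th roots of unity \<omega>^j isolates n(n+1)/2 b, whence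
  n \<parallel>b\<parallel> \<le> 2 for all n.\<close>

interpretation scaleC: module "scaleC :: complex \<Rightarrow> 'a::cstar_algebra \<Rightarrow> 'a"
  by standard (simp_all add: scaleC_add_right scaleC_add_left scaleC_scaleC scaleC_one)

lemma cstar_zero [simp]: "cstar (0::'a::cstar_algebra) = 0"
  by (metis add_cancel_right_right cstar_add)

lemma cstar_minus: "cstar (- x) = - cstar (x::'a::cstar_algebra)"
  by (metis add.left_inverse cstar_add cstar_zero eq_neg_iff_add_eq_0)

lemma cstar_diff: "cstar (x - y) = cstar x - cstar (y::'a::cstar_algebra)"
  by (simp only: diff_conv_add_uminus cstar_add cstar_minus)

lemma cstar_one [simp]: "cstar (1::'a::cstar_algebra) = 1"
  by (metis cstar_cstar cstar_mult mult_1_right)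

lemma cstar_scaleR: "cstar (r *\<^sub>R x) = r *\<^sub>R cstar (x::'a::cstar_algebra)"
  by (metis cstar_scaleC scaleC_of_real complex_cnj_complex_of_real)

lemma cstar_mult_self_eq_0_iff: "cstar x * x = 0 \<longleftrightarrow> (x::'a::cstar_algebra) = 0"
  using cstar_identity[of x] by auto

lemma norm_projection_le_1:
  assumes "is_projection (P::'a::cstar_algebra)"
  shows "norm P \<le> 1"
proof -
  have "(norm P)\<^sup>2 = norm P"
    using cstar_identity[of P] assms by (simp add: is_projection_def)
  then have "norm P * (norm P - 1) = 0"
    by (simp add: power2_eq_square algebra_simps)
  then show ?thesis by auto
qed

lemma is_projection_one_minus:
  "is_projection (P::'a::cstar_algebra) \<Longrightarrow> is_projection (1 - P)"
  by (simp add: is_projection_def cstar_diff algebra_simps)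

definition primitive_root_unity :: "nat \<Rightarrow> complex" where
  "primitive_root_unity n = cis (2*pi/n)"

lemma sum_power_primitive_root_unity:
  assumes "0 < n"
  shows "(\<Sum>j<n. (primitive_root_unity n ^ m) ^ j) = (if n dvd m then of_nat n else 0)"
proof -
  define w where "w = primitive_root_unity n ^ m"
  have w: "w = cis (2*pi*m/n)"
    unfolding w_def primitive_root_unity_def by (subst Complex.DeMoivre) (simp add: field_simps)
  have cis_2pi: "cis (2*pi) = 1"
    by (simp add: complex_eq_iff)
  show ?thesis
  proof (cases "n dvd m")
    case True
    then obtain k where "m = n * k" by auto
    then have "w = cis (2*pi) ^ k"
      unfolding w Complex.DeMoivre using assms by (simp add: field_simps)
    with True show ?thesis
      by (simp add: cis_2pi w_def)
  next
    case False
    have "w \<noteq> 1"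
    proof
      assume "w = 1"
      then have "cos (2*pi*m/n) = 1"
        unfolding w by (simp add: complex_eq_iff)
      then obtain k :: int where "2*pi*m/n = k * 2 * pi"
        by (auto simp: cos_one_2pi_int)
      then have "real_of_int (int m) = real_of_int (k * int n)"
        using assms by (simp add: field_simps)
      then have "int n dvd int m"
        by (simp only: of_int_eq_iff) simp
      with False show False by simp
    qed
    moreover have "w ^ n = 1"
    proof -
      have "w ^ n = cis (2*pi*m)"
        unfolding w Complex.DeMoivre using assms by (simp add: field_simps)
      also have "\<dots> = cis (2*pi) ^ m"
        unfolding Complex.DeMoivre by (simp add: mult_ac)
      finally show ?thesis by (simp add: cis_2pi)
    qed
    ultimately show ?thesis
      using False by (simp add: sum_gp_strict w_def)
  qed
qed

lemma Suc_dvd_add_iff: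
  assumes "1 \<le> n" "k \<le> n"
  shows "Suc n dvd n + k \<longleftrightarrow> k = 1"
proof
  assume "Suc n dvd n + k"
  then obtain q where "n + k = Suc n * q"
    by (metis dvdE)
  with assms show "k = 1"
    by (cases q; cases "q - 1") auto
qed simp

lemma sum_primitive_root_unity_binomial:
  fixes n k :: nat
  defines "\<omega> \<equiv> primitive_root_unity (Suc n)"
  assumes "1 \<le> n" "k \<le> n"
  shows "(\<Sum>j<Suc n. \<omega> ^ (j * n) * (of_nat (n choose k) * (\<omega> ^ j / 2) ^ k))
    = (if k = 1 then of_nat (Suc n) * of_nat n / 2 else 0)"
proof -
  have "(\<Sum>j<Suc n. \<omega> ^ (j * n) * (of_nat (n choose k) * (\<omega> ^ j / 2) ^ k))
      = of_nat (n choose k) / 2 ^ k * (\<Sum>j<Suc n. (\<omega> ^ (n + k)) ^ j)"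
    unfolding sum_distrib_left
    by (intro sum.cong refl)
      (simp add: power_divide power_add power_mult_distrib flip: power_mult add: mult.commute)
  also have "\<dots> = of_nat (n choose k) / 2 ^ k * (if k = 1 then of_nat (Suc n) else 0)"
    unfolding \<omega>_def sum_power_primitive_root_unity[OF zero_less_Suc] Suc_dvd_add_iff[OF assms(2,3)] ..
  finally show ?thesis
    by simp
qed

locale corner_perturbation =
  fixes P b :: "'a::cstar_algebra"
  assumes projection: "is_projection P"
    and selfadjoint: "cstar b = b"
    and left_corner: "P * b = b"
    and right_corner: "b * P = b"
    and norm_plus_le_1: "norm (P + b) \<le> 1"
    and norm_minus_le_1: "norm (P - b) \<le> 1"
begin

definition pencil :: "complex \<Rightarrow> 'a" where
  "pencil z = P + scaleC z b"

lemma idempotent: "P * P = P"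
  using projection by (simp add: is_projection_def)

lemma pencil_mult: "pencil w * pencil z = P + scaleC (w + z) b + scaleC (w * z) (b * b)"
  unfolding pencil_def
  by (simp add: algebra_simps scaleC_mult_left scaleC_mult_right scaleC_scaleC
      scaleC.scale_left_distrib idempotent left_corner right_corner)

lemma cstar_pencil: "cstar (pencil z) = pencil (cnj z)"
  using projection unfolding pencil_def is_projection_def
  by (simp only: cstar_add cstar_scaleC selfadjoint)

lemma norm_pencil_real_le_1:
  assumes "\<bar>c\<bar> \<le> 1"
  shows "norm (pencil (complex_of_real c)) \<le> 1"
proof -
  have "((1 + c) / 2) *\<^sub>R (P + b) + ((1 - c) / 2) *\<^sub>R (P - b)
      = ((1 + c) / 2 + (1 - c) / 2) *\<^sub>R P + ((1 + c) / 2 - (1 - c) / 2) *\<^sub>R b"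
    by (simp add: algebra_simps)
  then have "pencil (complex_of_real c) = ((1 + c) / 2) *\<^sub>R (P + b) + ((1 - c) / 2) *\<^sub>R (P - b)"
    unfolding pencil_def scaleC_of_real by (simp add: field_simps)
  also have "norm \<dots> \<le> ((1 + c) / 2) * norm (P + b) + ((1 - c) / 2) * norm (P - b)"
    using assms by (intro order.trans[OF norm_triangle_ineq] add_mono) auto
  also have "\<dots> \<le> ((1 + c) / 2) * 1 + ((1 - c) / 2) * 1"
    using assms norm_plus_le_1 norm_minus_le_1 by (intro add_mono mult_left_mono) auto
  finally show ?thesis by (simp add: field_simps)
qed

text \<open>The identity 2 pencil (cnj z) pencil z = pencil(x1)^2 + pencil(x2)^2 with the real numbers
  x1, x2 = Re z \<plusminus> Im z reduces the complex case to the real one.\<close>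

lemma norm_pencil_le_1:
  assumes "cmod z \<le> 1/2"
  shows "norm (pencil z) \<le> 1"
proof -
  define x1 where "x1 = Re z + Im z"
  define x2 where "x2 = Re z - Im z"
  have "(Re z)\<^sup>2 + (Im z)\<^sup>2 \<le> 1/4"
    using power_mono[OF assms norm_ge_zero, of 2] unfolding cmod_power2 by (simp add: power_divide)
  then have "x1\<^sup>2 \<le> 1" "x2\<^sup>2 \<le> 1"
    using zero_le_power2[of "Re z - Im z"] zero_le_power2[of "Re z + Im z"]
    unfolding x1_def x2_def power2_sum power2_diff by linarith+
  then have x12: "\<bar>x1\<bar> \<le> 1" "\<bar>x2\<bar> \<le> 1"
    by (simp_all add: abs_square_le_1)
  have sum_x: "of_real x1 + of_real x1 + (of_real x2 + of_real x2) = 2 * (cnj z + z)"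
    and sum_sq_x: "of_real x1 * of_real x1 + of_real x2 * of_real x2 = 2 * (cnj z * z)"
    by (simp_all add: complex_eq_iff x1_def x2_def algebra_simps power2_eq_square)
  have "pencil x1 * pencil x1 + pencil x2 * pencil x2
      = (P + P) + scaleC (2 * (cnj z + z)) b + scaleC (2 * (cnj z * z)) (b * b)"
    unfolding pencil_mult sum_x[symmetric] sum_sq_x[symmetric] scaleC.scale_left_distrib
    by (simp only: add_ac)
  also have "\<dots> = scaleC 2 (pencil (cnj z) * pencil z)"
    unfolding pencil_mult scaleC.scale_right_distrib scaleC_scaleC
    using scaleC.scale_left_distrib[of 1 1 P] by (simp add: scaleC_one one_add_one)
  finally have "pencil (cnj z) * pencil z = scaleC (1/2) (pencil x1 * pencil x1 + pencil x2 * pencil x2)"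
    by (simp add: scaleC_scaleC scaleC_one)
  then have "(norm (pencil z))\<^sup>2 = (1/2) * norm (pencil x1 * pencil x1 + pencil x2 * pencil x2)"
    using cstar_identity[of "pencil z"] by (simp add: cstar_pencil norm_scaleC)
  also have "\<dots> \<le> (1/2) * (norm (pencil x1) * norm (pencil x1) + norm (pencil x2) * norm (pencil x2))"
    by (intro mult_left_mono order.trans[OF norm_triangle_ineq] add_mono norm_mult_ineq) auto
  also have "\<dots> \<le> (1/2) * (1 * 1 + 1 * 1)"
    using norm_pencil_real_le_1[OF x12(1)] norm_pencil_real_le_1[OF x12(2)]
    by (intro mult_left_mono add_mono mult_mono) auto
  finally show ?thesis
    by (simp add: abs_square_le_1)
qed

lemma pencil_mult_proj_mult_power:
  "pencil z * (P * b ^ k) = P * b ^ k + scaleC z (P * b ^ Suc k)"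
proof -
  have "P * (P * b ^ k) = P * b ^ k" "b * (P * b ^ k) = P * b ^ Suc k"
    by (simp_all add: idempotent left_corner right_corner flip: mult.assoc)
  then show ?thesis
    unfolding pencil_def by (simp add: distrib_right scaleC_mult_left)
qed

lemma proj_mult_pencil_power:
  "P * pencil z ^ n = (\<Sum>k\<le>n. scaleC (of_nat (n choose k) * z ^ k) (P * b ^ k))"
proof (induction n)
  case 0
  then show ?case by simp
next
  case (Suc n)
  define g where "g k = scaleC (of_nat (n choose k) * z ^ k) (P * b ^ k)" for k
  define h where "h k = scaleC (of_nat (n choose k) * z ^ Suc k) (P * b ^ Suc k)" for k
  have "P * pencil z = pencil z * P"
    unfolding pencil_def
    by (simp add: algebra_simps idempotent left_corner right_corner scaleC_mult_left scaleC_mult_right)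
  then have "P * pencil z ^ Suc n = pencil z * (P * pencil z ^ n)"
    by (simp only: power_Suc flip: mult.assoc)
  also have "\<dots> = (\<Sum>k\<le>n. g k) + (\<Sum>k\<le>n. h k)"
    unfolding Suc g_def h_def
    by (simp add: sum_distrib_left scaleC_mult_right pencil_mult_proj_mult_power
        scaleC.scale_right_distrib sum.distrib scaleC_scaleC mult_ac)
  also have "(\<Sum>k\<le>n. g k) = g 0 + (\<Sum>k\<le>n. g (Suc k))"
    using sum.atMost_Suc_shift[of g n] by (simp add: g_def binomial_eq_0)
  also have "g 0 + (\<Sum>k\<le>n. g (Suc k)) + (\<Sum>k\<le>n. h k)
      = (\<Sum>k\<le>Suc n. scaleC (of_nat (Suc n choose k) * z ^ k) (P * b ^ k))"
    unfolding sum.atMost_Suc_shift[of _ "n"]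
    by (simp add: g_def h_def sum.distrib of_nat_add distrib_right scaleC.scale_left_distrib add_ac)
  finally show ?case .
qed

lemma of_nat_mult_norm_le_2:
  assumes "1 \<le> n"
  shows "real n * norm b \<le> 2"
proof -
  define \<omega> where "\<omega> = primitive_root_unity (Suc n)"
  define S where "S = (\<Sum>j<Suc n. scaleC (\<omega> ^ (j * n)) (P * pencil (\<omega> ^ j / 2) ^ n))"
  have norm_\<omega>: "cmod \<omega> = 1"
    by (simp add: \<omega>_def primitive_root_unity_def)
  have "norm S \<le> (\<Sum>j<Suc n. 1)"
    unfolding S_def
  proof (rule order.trans[OF norm_sum sum_mono])
    fix j
    have "norm (pencil (\<omega> ^ j / 2)) \<le> 1"
      by (rule norm_pencil_le_1) (simp add: norm_divide norm_power norm_\<omega>)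
    then have "norm (pencil (\<omega> ^ j / 2) ^ n) \<le> 1"
      by (meson norm_power_ineq order.trans power_le_one norm_ge_zero)
    then have "norm (P * pencil (\<omega> ^ j / 2) ^ n) \<le> 1"
      using norm_projection_le_1[OF projection]
      by (meson norm_mult_ineq order.trans mult_le_one norm_ge_zero)
    then show "norm (scaleC (\<omega> ^ (j * n)) (P * pencil (\<omega> ^ j / 2) ^ n)) \<le> 1"
      by (simp add: norm_scaleC norm_power norm_\<omega>)
  qed
  moreover have "S = scaleC (of_nat (Suc n) * of_nat n / 2) b"
  proof -
    have "S = (\<Sum>k\<le>n. scaleC (\<Sum>j<Suc n. \<omega> ^ (j * n) * (of_nat (n choose k) * (\<omega> ^ j / 2) ^ k))
                               (P * b ^ k))"
      unfolding S_def proj_mult_pencil_power scaleC.scale_sum_right scaleC_scaleC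
        scaleC.scale_sum_left
      by (rule sum.swap)
    also have "\<dots> = (\<Sum>k\<le>n. if k = 1 then scaleC (of_nat (Suc n) * of_nat n / 2) (P * b ^ k) else 0)"
      using sum_primitive_root_unity_binomial[OF assms] by (intro sum.cong refl) (simp add: \<omega>_def)
    finally show ?thesis
      using assms by (simp add: left_corner)
  qed
  moreover have "cmod (of_nat (Suc n) * of_nat n / 2) = real (Suc n) * real n / 2"
    by (metis norm_of_nat norm_divide norm_mult norm_numeral)
  ultimately have "real (Suc n) * (real n * norm b) \<le> real (Suc n) * 2"
    by (simp add: norm_scaleC algebra_simps)
  then show ?thesis
    by (simp only: mult_le_cancel_left_pos of_nat_0_less_iff zero_less_Suc)
qed

lemma perturbation_eq_0: "b = 0"
proof (rule ccontr)
  assume "b \<noteq> 0"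
  then obtain n :: nat where n: "2 / norm b < n"
    using reals_Archimedean2 by blast
  with \<open>b \<noteq> 0\<close> have "2 < real n * norm b"
    by (simp add: field_simps)
  moreover from this have "1 \<le> n"
    by (cases n) auto
  ultimately show False
    using of_nat_mult_norm_le_2 by fastforce
qed

end

lemma norm_proj_minus_compression_le_1:
  fixes P Q :: "'a::cstar_algebra"
  assumes "is_projection P" "is_projection Q"
  shows "norm (P - P * Q * P) \<le> 1"
proof -
  have "P - P * Q * P = P * (1 - Q) * P"
    using assms(1) by (simp add: is_projection_def algebra_simps)
  also have "norm \<dots> \<le> norm P * norm (1 - Q) * norm P"
    by (meson norm_mult_ineq order.trans mult_right_mono norm_ge_zero)
  also have "\<dots> \<le> 1 * 1 * 1"
    using assms by (intro mult_mono norm_projection_le_1 is_projection_one_minus) auto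
  finally show ?thesis by simp
qed

text \<open>With m = card S and c = P Q(l0) P / m, both P - c and P + c are averages of the contractions
  P and P - P Q(l) P, the latter since P Q(l0) P is minus the sum of the other P Q(l) P.\<close>

lemma corner_perturbation_averaged_compression:
  fixes P :: "'a::cstar_algebra" and Q :: "'i \<Rightarrow> 'a"
  assumes P: "is_projection P" and Q: "\<And>l. l \<in> S \<Longrightarrow> is_projection (Q l)"
    and "finite S" and l0: "l0 \<in> S" and sum_eq_0: "(\<Sum>l\<in>S. P * Q l * P) = 0"
  shows "corner_perturbation P ((1 / real (card S)) *\<^sub>R (P * Q l0 * P))"
proof -
  define m where "m = card S"
  have m: "1 \<le> m" "0 < real m" "1 / real m \<le> 1"
    using \<open>finite S\<close> l0 card_gt_0_iff[of S] by (auto simp: m_def)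
  define a where "a l = P * Q l * P" for l
  define c where "c = (1 / real m) *\<^sub>R a l0"
  have c: "(1 / real (card S)) *\<^sub>R (P * Q l0 * P) = c"
    by (simp add: c_def a_def m_def)
  have cstar_P: "cstar P = P" and idem_P: "P * P = P"
    using P by (auto simp: is_projection_def)
  have norm_P: "norm P \<le> 1"
    using P by (rule norm_projection_le_1)
  have norm_a: "norm (P - a l) \<le> 1" if "l \<in> S" for l
    unfolding a_def using P Q[OF that] by (rule norm_proj_minus_compression_le_1)
  have "norm (P - c) \<le> 1"
  proof -
    have "P - c = (1 / real m) *\<^sub>R (P - a l0) + (1 - 1 / real m) *\<^sub>R P"
      unfolding c_def by (simp add: algebra_simps)
    also have "norm \<dots> \<le> (1 / real m) * 1 + (1 - 1 / real m) * 1"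
      using m norm_a[OF l0] mult_left_mono[OF norm_P, of "1 - 1 / real m"]
      by (intro order.trans[OF norm_triangle_ineq] add_mono) (auto simp: divide_right_mono)
    finally show ?thesis by simp
  qed
  moreover have "norm (P + c) \<le> 1"
  proof -
    have "a l0 = - (\<Sum>l\<in>S - {l0}. a l)"
      using sum_eq_0 sum.remove[OF \<open>finite S\<close> l0, of a] unfolding a_def
      by (simp add: eq_neg_iff_add_eq_0)
    then have "(\<Sum>l\<in>S - {l0}. P - a l) = real (m - 1) *\<^sub>R P + a l0"
      using \<open>finite S\<close> l0 by (simp add: sum_subtractf m_def scaleR_conv_of_real)
    then have "P + c = (1 / real m) *\<^sub>R (P + (\<Sum>l\<in>S - {l0}. P - a l))"
      using m by (simp add: c_def of_nat_diff algebra_simps flip: scaleR_add_left)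
    also have "norm \<dots> \<le> (1 / real m) * (1 + (\<Sum>l\<in>S - {l0}. 1))"
    proof -
      have "norm (P + (\<Sum>l\<in>S - {l0}. P - a l)) \<le> norm P + (\<Sum>l\<in>S - {l0}. norm (P - a l))"
        by (rule order.trans[OF norm_triangle_ineq add_left_mono[OF norm_sum]])
      also have "\<dots> \<le> 1 + (\<Sum>l\<in>S - {l0}. 1)"
        using norm_P norm_a by (intro add_mono sum_mono) auto
      finally show ?thesis
        using m by (simp add: divide_right_mono)
    qed
    also have "\<dots> = 1"
      using \<open>finite S\<close> l0 m by (auto simp: m_def of_nat_diff)
    finally show ?thesis .
  qed
  moreover have "cstar c = c"
    using Q[OF l0] unfolding c_def a_def is_projection_def
    by (simp add: cstar_scaleR cstar_mult cstar_P mult.assoc)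
  moreover have "P * c = c" "c * P = c"
    unfolding c_def a_def by (simp_all add: mult.assoc idem_P flip: mult.assoc[of P P])
  ultimately show ?thesis
    unfolding c using P by unfold_locales
qed

lemma proj_mult_eq_0_if_sum_compressions_eq_0:
  fixes P :: "'a::cstar_algebra" and Q :: "'i \<Rightarrow> 'a"
  assumes P: "is_projection P" and Q: "\<And>l. l \<in> S \<Longrightarrow> is_projection (Q l)"
    and "finite S" and l0: "l0 \<in> S" and "(\<Sum>l\<in>S. P * Q l * P) = 0"
  shows "Q l0 * P = 0"
proof -
  interpret corner_perturbation P "(1 / real (card S)) *\<^sub>R (P * Q l0 * P)"
    using corner_perturbation_averaged_compression[OF assms] .
  have "card S \<noteq> 0"
    using \<open>finite S\<close> l0 by auto
  then have "P * Q l0 * P = 0"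
    using perturbation_eq_0 by simp
  moreover have "cstar (Q l0 * P) * (Q l0 * P) = P * Q l0 * P"
    using P Q[OF l0] unfolding is_projection_def
    by (simp add: cstar_mult mult.assoc flip: mult.assoc[of "Q l0" "Q l0"])
  ultimately show ?thesis
    by (simp only: cstar_mult_self_eq_0_iff)
qed

lemma magic_unitary_row_orthogonal:
  assumes mu: "magic_unitary N u" and "i \<in> {1..N}" "j \<in> {1..N}" "l \<in> {1..N}" "l \<noteq> j"
  shows "u i l * u i j = 0"
proof -
  have proj: "is_projection (u i l)" if "l \<in> {1..N}" for l
    using mu assms(2) that by (simp add: magic_unitary_def)
  have row_rest: "(\<Sum>l\<in>{1..N} - {j}. u i l) = 1 - u i j"
    using mu assms(2,3) sum.remove[of "{1..N}" j "u i"] by (simp add: magic_unitary_def algebra_simps)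
  have "(\<Sum>l\<in>{1..N} - {j}. u i j * u i l * u i j) = u i j * (1 - u i j) * u i j"
    by (simp only: row_rest flip: sum_distrib_left sum_distrib_right)
  also have "\<dots> = 0"
    using proj[OF assms(3)] by (simp add: is_projection_def algebra_simps)
  finally show ?thesis
    using assms proj by (intro proj_mult_eq_0_if_sum_compressions_eq_0) auto
qed

lemma cstar_tensor_zero_left:
  assumes "cstar_tensor tp"
  shows "tp 0 y = 0"
proof -
  have "tp (0 + 0) y = tp 0 y + tp 0 y"
    using assms by (simp only: cstar_tensor_def)
  then show ?thesis by simp
qed

context
  fixes N :: nat and u :: "nat \<Rightarrow> nat \<Rightarrow> 'a::cstar_algebra"
    and tp :: "'a \<Rightarrow> 'a \<Rightarrow> 'b::cstar_algebra" and \<Delta> :: "'a \<Rightarrow> 'b"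
  assumes qpg: "quantum_permutation_group N u tp \<Delta>"
begin

lemma comult_sandwich_entry:
  assumes "i \<in> {1..N}" "j \<in> {1..N}" "k \<in> {1..N}"
  shows "tp (u i j) 1 * \<Delta> (u i k) = tp (u i j) (u j k)"
    and "\<Delta> (u i k) * tp (u i j) 1 = tp (u i j) (u j k)"
proof -
  have mu: "magic_unitary N u" and ct: "cstar_tensor tp"
    and comult: "\<Delta> (u i k) = (\<Sum>l\<in>{1..N}. tp (u i l) (u l k))"
    using qpg assms by (auto simp: quantum_permutation_group_def)
  have tp_mult: "tp x y * tp z w = tp (x * z) (y * w)" for x y z w
    using ct by (simp add: cstar_tensor_def)
  have idem: "u i j * u i j = u i j"
    using mu assms by (simp add: magic_unitary_def is_projection_def)
  have collapse: "(\<Sum>l\<in>{1..N}. tp (f l) (u l k)) = tp (u i j) (u j k)"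
    if "f j = u i j" "\<And>l. l \<in> {1..N} \<Longrightarrow> l \<noteq> j \<Longrightarrow> f l = 0" for f
    using that assms(2) cstar_tensor_zero_left[OF ct]
    by (subst sum.mono_neutral_right[of "{1..N}" "{j}"]) auto
  show "tp (u i j) 1 * \<Delta> (u i k) = tp (u i j) (u j k)"
    unfolding comult sum_distrib_left tp_mult mult_1_left
    by (intro collapse) (auto simp: idem intro: magic_unitary_row_orthogonal[OF mu assms(1) _ assms(2)])
  show "\<Delta> (u i k) * tp (u i j) 1 = tp (u i j) (u j k)"
    unfolding comult sum_distrib_right tp_mult mult_1_right
    using magic_unitary_row_orthogonal[OF mu assms(1,2)] idem
    by (intro collapse) auto
qed

lemma entry_products_nonzero_trans:
  assumes "i2 \<in> {1..N}" "i1 \<in> {1..N}" "j2 \<in> {1..N}" "j1 \<in> {1..N}" "k2 \<in> {1..N}" "k1 \<in> {1..N}"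
    and ij: "u i2 j2 * u i1 j1 \<noteq> 0" and jk: "u j2 k2 * u j1 k1 \<noteq> 0"
  shows "u i2 k2 * u i1 k1 \<noteq> 0"
proof
  assume ik: "u i2 k2 * u i1 k1 = 0"
  have ct: "cstar_tensor tp" and hom: "unital_star_hom \<Delta>"
    using qpg by (simp_all add: quantum_permutation_group_def)
  have "\<Delta> 0 = 0"
    using hom unfolding unital_star_hom_def by (metis add_cancel_right_right)
  with ik have "0 = tp (u i2 j2) 1 * \<Delta> (u i2 k2 * u i1 k1) * tp (u i1 j1) 1"
    by simp
  also have "\<dots> = (tp (u i2 j2) 1 * \<Delta> (u i2 k2)) * (\<Delta> (u i1 k1) * tp (u i1 j1) 1)"
    using hom by (simp add: unital_star_hom_def mult.assoc)
  also have "\<dots> = tp (u i2 j2 * u i1 j1) (u j2 k2 * u j1 k1)"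
    using assms ct by (simp add: comult_sandwich_entry cstar_tensor_def)
  finally have "norm (u i2 j2 * u i1 j1) * norm (u j2 k2 * u j1 k1) = 0"
    using ct unfolding cstar_tensor_def by (metis norm_zero)
  with ij jk show False
    by simp
qed

end

lemma mem_orbital_rel_2_iff:
  "(xs, ys) \<in> orbital_rel N u 2 \<longleftrightarrow>
    (\<exists>i2 i1 j2 j1. xs = [i2, i1] \<and> ys = [j2, j1] \<and> {i2, i1, j2, j1} \<subseteq> {1..N}
      \<and> u i2 j2 * u i1 j1 \<noteq> 0)"
  by (auto simp: orbital_rel_def numeral_2_eq_2 length_Suc_conv)

theorem mainTheorem12:
  fixes N :: nat
    and u :: "nat \<Rightarrow> nat \<Rightarrow> 'a::cstar_algebra"
    and tp :: "'a \<Rightarrow> 'a \<Rightarrow> 'b::cstar_algebra"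
    and \<Delta> :: "'a \<Rightarrow> 'b"
  assumes "quantum_permutation_group N u tp \<Delta>"
  shows "trans (orbital_rel N u 2)"
proof (rule transI)
  fix xs ys zs
  assume "(xs, ys) \<in> orbital_rel N u 2" "(ys, zs) \<in> orbital_rel N u 2"
  then obtain i2 i1 j2 j1 k2 k1 where "xs = [i2, i1]" "ys = [j2, j1]" "zs = [k2, k1]"
    and indices: "{i2, i1, j2, j1, k2, k1} \<subseteq> {1..N}"
    and ij: "u i2 j2 * u i1 j1 \<noteq> 0" and jk: "u j2 k2 * u j1 k1 \<noteq> 0"
    unfolding mem_orbital_rel_2_iff by (metis insert_subset list.inject)
  moreover have "u i2 k2 * u i1 k1 \<noteq> 0"
    using indices by (intro entry_products_nonzero_trans[OF assms _ _ _ _ _ _ ij jk]) auto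
  ultimately show "(xs, zs) \<in> orbital_rel N u 2"
    unfolding mem_orbital_rel_2_iff by auto
qed

end
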